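(* Let $\mathcal{A}=\{H_1,\dots,H_n\}$ be an arrangement of distinct lines in $\mathbb{P}^2_{\mathbb{C}}$ and let $\mathcal{A}_t=\{H_1,\dots,H_t\}$ for $t=1,\dots,n$. If $|H_t\cap\operatorname{mult}(\mathcal{A}_t)|\le 2$ for all $t=1,\dots,n$, then $\mathcal{R}(I(\mathcal{A}))$ is irreducible.
   Context: Lines $H_i=\{a_ix+b_iy+c_iz=0\}$ are identified with points $(a_i:b_i:c_i)\in(\mathbb{P}^2)^*$; $\det(H_i,H_j,H_k)$ is the determinant of the matrix of their coefficient rows. The incidence is $I(\mathcal{A})=\{\{i,j,k\}: i,j,k \text{ distinct},\ H_i\cap H_j\cap H_k\ne\emptyset\}$. For a set $I$ of 3-subsets of $\{1,\dots,n\}$, $\mathcal{R}(I)=\{(H_1,\dots,H_n)\in((\mathbb{P}^2)^* )^n: H_i\ne H_j\ (i\ne j),\ \det(H_i,H_j,H_k)=0 \text{ iff } \{i,j,k\}\in I\}$, with the Zariski topology. $\operatorname{mult}(\mathcal{A})$ is the set of points lying on at least three lines of $\mathcal{A}$. *)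

theory Defs
  imports "HOL-Analysis.Analysis"
begin

text \<open>The complex projective plane (and its dual): a point is the set of nonzero
  scalar multiples of a nonzero vector of \<open>\<complex>\<^sup>3\<close>, i.e. its class of homogeneous coordinates.\<close>
definition P2 :: "(complex^3) set set" where
  "P2 = {{c *s v | c. c \<noteq> 0} | v. v \<noteq> 0}"

text \<open>Determinant of three lines (rows = coefficient vectors) vanishes; independent of representatives.\<close>
definition det_zero :: "(complex^3) set \<Rightarrow> (complex^3) set \<Rightarrow> (complex^3) set \<Rightarrow> bool" where
  "det_zero P Q R \<longleftrightarrow> (\<exists>u\<in>P. \<exists>v\<in>Q. \<exists>w\<in>R.
      det ((\<chi> i. if i = 1 then u else if i = 2 then v else w) :: complex^3^3) = 0)"

definition on_line :: "(complex^3) set \<Rightarrow> (complex^3) set \<Rightarrow> bool" where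
  "on_line p H \<longleftrightarrow> (\<exists>x\<in>p. \<exists>a\<in>H. (\<Sum>i\<in>UNIV. a $ i * x $ i) = 0)"

definition line_points :: "(complex^3) set \<Rightarrow> (complex^3) set set" where
  "line_points H = {p \<in> P2. on_line p H}"

definition incidence :: "nat \<Rightarrow> (nat \<Rightarrow> (complex^3) set) \<Rightarrow> nat set set" where
  "incidence n H = {{i, j, k} | i j k. i \<in> {1..n} \<and> j \<in> {1..n} \<and> k \<in> {1..n} \<and>
      i \<noteq> j \<and> i \<noteq> k \<and> j \<noteq> k \<and>
      (\<exists>p\<in>P2. on_line p (H i) \<and> on_line p (H j) \<and> on_line p (H k))}"

definition mult_pts :: "nat \<Rightarrow> (nat \<Rightarrow> (complex^3) set) \<Rightarrow> (complex^3) set set" where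
  "mult_pts t H = {p \<in> P2. card {i \<in> {1..t}. on_line p (H i)} \<ge> 3}"

text \<open>The realization space \<open>\<R>(I) \<subseteq> ((\<P>\<^sup>2)\<^sup>*)\<^sup>n\<close>; tuples are functions on \<open>{1..n}\<close>.\<close>
definition realization_space :: "nat \<Rightarrow> nat set set \<Rightarrow> (nat \<Rightarrow> (complex^3) set) set" where
  "realization_space n I = {H \<in> PiE {1..n} (\<lambda>_. P2).
      (\<forall>i\<in>{1..n}. \<forall>j\<in>{1..n}. i \<noteq> j \<longrightarrow> H i \<noteq> H j) \<and>
      (\<forall>i\<in>{1..n}. \<forall>j\<in>{1..n}. \<forall>k\<in>{1..n}. i \<noteq> j \<and> i \<noteq> k \<and> j \<noteq> k \<longrightarrow>
         (det_zero (H i) (H j) (H k) \<longleftrightarrow> {i, j, k} \<in> I))}"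

inductive_set polyfun :: "nat \<Rightarrow> ((nat \<Rightarrow> complex^3) \<Rightarrow> complex) set" for n :: nat where
  pconst: "(\<lambda>_. c) \<in> polyfun n"
| pcoord: "i \<in> {1..n} \<Longrightarrow> (\<lambda>x. x i $ j) \<in> polyfun n"
| padd: "f \<in> polyfun n \<Longrightarrow> g \<in> polyfun n \<Longrightarrow> (\<lambda>x. f x + g x) \<in> polyfun n"
| pmult: "f \<in> polyfun n \<Longrightarrow> g \<in> polyfun n \<Longrightarrow> (\<lambda>x. f x * g x) \<in> polyfun n"

definition multihom :: "nat \<Rightarrow> ((nat \<Rightarrow> complex^3) \<Rightarrow> complex) \<Rightarrow> bool" where
  "multihom n f \<longleftrightarrow> f \<in> polyfun n \<and> (\<exists>d :: nat \<Rightarrow> nat. \<forall>x (l :: nat \<Rightarrow> complex).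
      (\<forall>i\<in>{1..n}. l i \<noteq> 0) \<longrightarrow> f (\<lambda>i. l i *s x i) = (\<Prod>i\<in>{1..n}. l i ^ d i) * f x)"

definition zariski_closed :: "nat \<Rightarrow> (nat \<Rightarrow> (complex^3) set) set \<Rightarrow> bool" where
  "zariski_closed n C \<longleftrightarrow> (\<exists>F. (\<forall>f\<in>F. multihom n f) \<and>
      C = {H \<in> PiE {1..n} (\<lambda>_. P2). \<forall>f\<in>F. \<forall>x. (\<forall>i\<in>{1..n}. x i \<in> H i) \<longrightarrow> f x = 0})"

definition zariski_irreducible :: "nat \<Rightarrow> (nat \<Rightarrow> (complex^3) set) set \<Rightarrow> bool" where
  "zariski_irreducible n S \<longleftrightarrow> S \<noteq> {} \<and> S \<subseteq> PiE {1..n} (\<lambda>_. P2) \<and>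
     (\<forall>C1 C2. zariski_closed n C1 \<and> zariski_closed n C2 \<and> S \<subseteq> C1 \<union> C2 \<longrightarrow> S \<subseteq> C1 \<or> S \<subseteq> C2)"

end

theory Submission
  imports Defs "HOL-Computational_Algebra.Polynomial"
begin

(* Proof idea: build the realization space line by line.  The pairs of earlier lines that are
   concurrent with H t meet in at most two distinct points of H t.  If there is none, H t is a
   free point of the dual plane; if there is one point p, H t is the line joining p to a free
   point; if there are two, H t is the line joining them.  This gives a polynomial map ph from
   free parameters y in (C^3)^n to coordinates of lines (param), and R(I) is exactly the image
   of the Zariski open set U of parameters whose lines represent a realization of I.  An image
   of a nonempty open subset of affine space under a polynomial map is irreducible, since the
   ring of polynomial functions is an integral domain. *)

section \<open>Bilinear vector algebra in \<open>\<complex>\<^sup>3\<close>\<close>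

(* The (non-Hermitian) bilinear pairing of a line with a point, and the cross product:
   for lines u, v the cross product is their intersection point, for points it is the line
   joining them. *)
definition bdot :: "complex^3 \<Rightarrow> complex^3 \<Rightarrow> complex" where
  "bdot a x = a$1 * x$1 + a$2 * x$2 + a$3 * x$3"

definition cross :: "complex^3 \<Rightarrow> complex^3 \<Rightarrow> complex^3" where
  "cross u v = vector [u$2 * v$3 - u$3 * v$2, u$3 * v$1 - u$1 * v$3, u$1 * v$2 - u$2 * v$1]"

definition triple :: "complex^3 \<Rightarrow> complex^3 \<Rightarrow> complex^3 \<Rightarrow> complex" where
  "triple u v w = bdot (cross u v) w"

lemma cross_nth [simp]:
  "cross u v $ 1 = u$2 * v$3 - u$3 * v$2"
  "cross u v $ 2 = u$3 * v$1 - u$1 * v$3"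
  "cross u v $ 3 = u$1 * v$2 - u$2 * v$1"
  by (simp_all add: cross_def)

lemma vec3_eq_iff: "(u::complex^3) = v \<longleftrightarrow> u$1 = v$1 \<and> u$2 = v$2 \<and> u$3 = v$3"
  by (simp add: vec_eq_iff forall_3)

lemma vec3_nonzero_iff: "(u::complex^3) \<noteq> 0 \<longleftrightarrow> u$1 \<noteq> 0 \<or> u$2 \<noteq> 0 \<or> u$3 \<noteq> 0"
  by (simp add: vec3_eq_iff)

lemma bdot_commute: "bdot a b = bdot b a"
  by (simp add: bdot_def algebra_simps)

lemma bdot_cross [simp]:
  "bdot (cross u v) u = 0" "bdot (cross u v) v = 0" "bdot u (cross u v) = 0" "bdot v (cross u v) = 0"
  by (simp_all add: bdot_def algebra_simps)

lemma bdot_smult [simp]: "bdot (c *s a) b = c * bdot a b" "bdot a (c *s b) = c * bdot a b"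
  by (simp_all add: bdot_def algebra_simps)

lemma cross_smult [simp]: "cross (c *s u) v = c *s cross u v" "cross u (c *s v) = c *s cross u v"
  by (simp_all add: vec3_eq_iff algebra_simps)

lemma cross_cross: "cross (cross u v) w = bdot u w *s v - bdot v w *s u"
  by (simp add: vec3_eq_iff bdot_def algebra_simps)

lemma cross_self [simp]: "cross u u = 0"
  by (simp add: vec3_eq_iff)

lemma triple_cycle: "triple u v w = triple v w u"
  by (simp add: triple_def bdot_def algebra_simps)

lemma triple_smult [simp]: "triple (a *s u) (b *s v) (c *s w) = a * b * c * triple u v w"
  by (simp add: triple_def)

lemma det_rows_triple:
  "det ((\<chi> i. if i = 1 then u else if i = 2 then v else w) :: complex^3^3) = triple u v w"
  by (simp add: det_3 triple_def bdot_def algebra_simps)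

lemma cross_eq_0_proportional:
  assumes "cross a b = 0" "a \<noteq> 0"
  shows "\<exists>c. b = c *s a"
proof -
  from assms(1) have e: "a$2*b$3 = a$3*b$2" "a$3*b$1 = a$1*b$3" "a$1*b$2 = a$2*b$1"
    by (auto simp: vec3_eq_iff)
  from assms(2) consider "a$1 \<noteq> 0" | "a$2 \<noteq> 0" | "a$3 \<noteq> 0" by (auto simp: vec3_nonzero_iff)
  then show ?thesis
  proof cases
    case 1
    then have "b = (b$1 / a$1) *s a" using e by (auto simp: vec3_eq_iff field_simps; metis mult.commute)
    then show ?thesis by blast
  next
    case 2
    then have "b = (b$2 / a$2) *s a" using e by (auto simp: vec3_eq_iff field_simps; metis mult.commute)
    then show ?thesis by blast
  next
    case 3
    then have "b = (b$3 / a$3) *s a" using e by (auto simp: vec3_eq_iff field_simps; metis mult.commute)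
    then show ?thesis by blast
  qed
qed

lemma orthogonal_to_two:
  assumes "cross u v \<noteq> 0" "bdot u w = 0" "bdot v w = 0"
  shows "\<exists>c. w = c *s cross u v"
  using cross_eq_0_proportional[of "cross u v" w] assms by (simp add: cross_cross)

lemma common_point_triple_zero:
  assumes "p \<noteq> 0" "bdot u p = 0" "bdot v p = 0" "bdot w p = 0" "cross u v \<noteq> 0"
  shows "triple u v w = 0"
proof -
  obtain c where c: "p = c *s cross u v" using orthogonal_to_two assms by blast
  with assms(1) have "c \<noteq> 0" by auto
  have "bdot w p = c * triple u v w" by (simp add: c triple_def bdot_commute)
  with assms(4) \<open>c \<noteq> 0\<close> show ?thesis by simp
qed

(* An explicit preimage under cross p: every w with bdot p w = 0 is cross p (cross_solve p w).
   It lets a parameter vector be chosen that reproduces a prescribed line through a point. *)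
definition cross_solve :: "complex^3 \<Rightarrow> complex^3 \<Rightarrow> complex^3" where
  "cross_solve p w = (if p$1 \<noteq> 0 then vector [0, w$3/p$1, -w$2/p$1]
     else if p$2 \<noteq> 0 then vector [-w$3/p$2, 0, w$1/p$2]
     else vector [w$2/p$3, -w$1/p$3, 0])"

lemma cross_cross_solve:
  assumes "p \<noteq> 0" "bdot p w = 0"
  shows "cross p (cross_solve p w) = w"
proof -
  have d: "p$1*w$1 + p$2*w$2 + p$3*w$3 = 0" using assms(2) by (simp add: bdot_def)
  consider "p$1 \<noteq> 0" | "p$1 = 0" "p$2 \<noteq> 0" | "p$1 = 0" "p$2 = 0" "p$3 \<noteq> 0"
    using assms(1) by (auto simp: vec3_nonzero_iff)
  then show ?thesis
  proof cases
    case 1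
    then show ?thesis using d by (simp add: cross_solve_def vec3_eq_iff field_simps; algebra)
  next
    case 2
    then show ?thesis using d by (simp add: cross_solve_def vec3_eq_iff field_simps; algebra)
  next
    case 3
    then show ?thesis using d by (simp add: cross_solve_def vec3_eq_iff field_simps; algebra)
  qed
qed

definition pclass :: "complex^3 \<Rightarrow> (complex^3) set" where
  "pclass v = {c *s v | c. c \<noteq> 0}"

lemma in_pclass: "x \<in> pclass v \<longleftrightarrow> (\<exists>c. c \<noteq> 0 \<and> x = c *s v)"
  by (auto simp: pclass_def)

lemma self_in_pclass: "v \<in> pclass v"
  unfolding in_pclass by (rule exI[of _ 1]) simp

lemma pclass_in_P2: "v \<noteq> 0 \<Longrightarrow> pclass v \<in> P2"
  unfolding P2_def pclass_def by blast

definition rep :: "(complex^3) set \<Rightarrow> complex^3" where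
  "rep A = (SOME v. v \<noteq> 0 \<and> A = pclass v)"

lemma rep: assumes "A \<in> P2" shows "rep A \<noteq> 0" "A = pclass (rep A)"
proof -
  have "\<exists>v. v \<noteq> 0 \<and> A = pclass v" using assms unfolding P2_def pclass_def by blast
  then have "rep A \<noteq> 0 \<and> A = pclass (rep A)" unfolding rep_def by (rule someI_ex)
  then show "rep A \<noteq> 0" "A = pclass (rep A)" by auto
qed

lemma pclass_smult:
  assumes "c \<noteq> 0"
  shows "pclass (c *s v) = pclass v"
proof (rule set_eqI)
  fix x
  show "x \<in> pclass (c *s v) \<longleftrightarrow> x \<in> pclass v"
    unfolding in_pclass
  proof
    assume "\<exists>d. d \<noteq> 0 \<and> x = d *s (c *s v)"
    then obtain d where "d \<noteq> 0" "x = (d * c) *s v" by auto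
    then show "\<exists>d. d \<noteq> 0 \<and> x = d *s v" using assms by (intro exI[of _ "d * c"]) simp
  next
    assume "\<exists>d. d \<noteq> 0 \<and> x = d *s v"
    then obtain d where "d \<noteq> 0" "x = (d / c) *s (c *s v)" using assms by auto
    then show "\<exists>d. d \<noteq> 0 \<and> x = d *s (c *s v)" using assms by (intro exI[of _ "d / c"]) simp
  qed
qed

lemma pclass_eq_iff:
  assumes "u \<noteq> 0" "v \<noteq> 0"
  shows "pclass u = pclass v \<longleftrightarrow> cross u v = 0"
proof
  assume "pclass u = pclass v"
  then have "v \<in> pclass u" using self_in_pclass by simp
  then show "cross u v = 0" by (auto simp: in_pclass)
next
  assume "cross u v = 0"
  then obtain c where c: "v = c *s u" using cross_eq_0_proportional assms by blast
  with assms have "c \<noteq> 0" by auto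
  then show "pclass u = pclass v" using c pclass_smult by simp
qed

lemma on_line_pclass:
  assumes "a \<noteq> 0"
  shows "on_line (pclass x) (pclass a) \<longleftrightarrow> bdot a x = 0"
proof -
  have sum_bdot: "(\<Sum>i\<in>UNIV. b $ i * y $ i) = bdot b y" for b y :: "complex^3"
    by (simp add: sum_3 bdot_def)
  show ?thesis
    unfolding on_line_def sum_bdot
  proof
    assume "\<exists>x'\<in>pclass x. \<exists>a'\<in>pclass a. bdot a' x' = 0"
    then obtain c d where "c \<noteq> 0" "d \<noteq> 0" "bdot (d *s a) (c *s x) = 0" by (auto simp: in_pclass)
    then show "bdot a x = 0" by simp
  next
    assume "bdot a x = 0"
    then show "\<exists>x'\<in>pclass x. \<exists>a'\<in>pclass a. bdot a' x' = 0" using self_in_pclass by blast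
  qed
qed

lemma det_zero_pclass: "det_zero (pclass u) (pclass v) (pclass w) \<longleftrightarrow> triple u v w = 0"
  unfolding det_zero_def det_rows_triple
proof
  assume "\<exists>u'\<in>pclass u. \<exists>v'\<in>pclass v. \<exists>w'\<in>pclass w. triple u' v' w' = 0"
  then obtain a b c where "a \<noteq> 0" "b \<noteq> 0" "c \<noteq> 0" "triple (a *s u) (b *s v) (c *s w) = 0"
    by (auto simp: in_pclass)
  then show "triple u v w = 0" by simp
next
  assume "triple u v w = 0"
  then show "\<exists>u'\<in>pclass u. \<exists>v'\<in>pclass v. \<exists>w'\<in>pclass w. triple u' v' w' = 0"
    using self_in_pclass by blast
qed

section \<open>Polynomial functions of the parameters\<close>

definition polyvec :: "nat \<Rightarrow> ((nat \<Rightarrow> complex^3) \<Rightarrow> complex^3) \<Rightarrow> bool" where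
  "polyvec n u \<longleftrightarrow> (\<forall>j. (\<lambda>y. u y $ j) \<in> polyfun n)"

lemma polyfun_diff: "f \<in> polyfun n \<Longrightarrow> g \<in> polyfun n \<Longrightarrow> (\<lambda>x. f x - g x) \<in> polyfun n"
  using polyfun.padd[OF _ polyfun.pmult[OF polyfun.pconst[of "-1"]], of f n g] by simp

lemma polyvec_coord: "i \<in> {1..n} \<Longrightarrow> polyvec n (\<lambda>y. y i)"
  by (simp add: polyvec_def polyfun.pcoord)

lemma polyvec_cross:
  assumes "polyvec n u" "polyvec n v"
  shows "polyvec n (\<lambda>y. cross (u y) (v y))"
  unfolding polyvec_def
proof
  fix j :: 3
  have m: "(\<lambda>y. u y $ a * v y $ b - u y $ c * v y $ d) \<in> polyfun n" for a b c d
    using assms unfolding polyvec_def by (intro polyfun_diff polyfun.pmult) auto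
  consider "j = 1" | "j = 2" | "j = 3" using exhaust_3 by blast
  then show "(\<lambda>y. cross (u y) (v y) $ j) \<in> polyfun n"
    by cases (use m in simp_all)
qed

lemma polyfun_triple:
  assumes "polyvec n u" "polyvec n v" "polyvec n w"
  shows "(\<lambda>y. triple (u y) (v y) (w y)) \<in> polyfun n"
  using polyvec_cross[OF assms(1,2)] assms(3)
  unfolding triple_def bdot_def polyvec_def by (intro polyfun.padd polyfun.pmult; blast)

lemma polyfun_cong: "f \<in> polyfun n \<Longrightarrow> \<forall>i\<in>{1..n}. x i = z i \<Longrightarrow> f x = f z"
  by (induction f rule: polyfun.induct) auto

lemma polyfun_comp:
  assumes "f \<in> polyfun n" "\<And>i. i \<in> {1..n} \<Longrightarrow> polyvec n (\<lambda>y. \<psi> y i)"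
  shows "(\<lambda>y. f (\<psi> y)) \<in> polyfun n"
  using assms
proof (induction f rule: polyfun.induct)
  case (pconst c)
  show ?case by (rule polyfun.pconst)
next
  case (pcoord i j)
  then show ?case by (simp add: polyvec_def)
next
  case (padd f g)
  then show ?case by (simp add: polyfun.padd)
next
  case (pmult f g)
  then show ?case by (simp add: polyfun.pmult)
qed

lemma polyfun_prod:
  assumes "finite S" "\<And>c. c \<in> S \<Longrightarrow> f c \<in> polyfun n"
  shows "(\<lambda>y. \<Prod>c\<in>S. f c y) \<in> polyfun n"
  using assms
proof (induction S rule: finite_induct)
  case empty
  show ?case by (simp add: polyfun.pconst)
next
  case (insert c S)
  then show ?case by (simp add: polyfun.pmult)
qed

lemma polyfun_on_segment:
  "f \<in> polyfun n \<Longrightarrow> \<exists>P. \<forall>t. f (\<lambda>i. a i + t *s (b i - a i)) = poly P t"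
proof (induction f rule: polyfun.induct)
  case (pconst c)
  show ?case by (intro exI[of _ "[:c:]"]) simp
next
  case (pcoord i j)
  show ?case by (intro exI[of _ "[:a i $ j, b i $ j - a i $ j:]"]) (simp add: algebra_simps)
next
  case (padd f g)
  then obtain P Q where "\<forall>t. f (\<lambda>i. a i + t *s (b i - a i)) = poly P t"
    "\<forall>t. g (\<lambda>i. a i + t *s (b i - a i)) = poly Q t" by blast
  then show ?case by (intro exI[of _ "P + Q"]) simp
next
  case (pmult f g)
  then obtain P Q where "\<forall>t. f (\<lambda>i. a i + t *s (b i - a i)) = poly P t"
    "\<forall>t. g (\<lambda>i. a i + t *s (b i - a i)) = poly Q t" by blast
  then show ?case by (intro exI[of _ "P * Q"]) simp
qed

lemma polyfun_mult_nonzero: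
  assumes f: "f \<in> polyfun n" and g: "g \<in> polyfun n" and "f a \<noteq> 0" "g b \<noteq> 0"
  obtains z where "f z * g z \<noteq> 0"
proof -
  define seg where "seg t = (\<lambda>i. a i + t *s (b i - a i))" for t :: complex
  obtain P Q where P: "\<And>t. f (seg t) = poly P t" and Q: "\<And>t. g (seg t) = poly Q t"
    using polyfun_on_segment[OF f] polyfun_on_segment[OF g] unfolding seg_def by metis
  have "seg 0 = a" "seg 1 = b" by (auto simp: seg_def vec_eq_iff)
  then have "P \<noteq> 0" "Q \<noteq> 0" using P[of 0] Q[of 1] assms(3,4) by auto
  then obtain t where "poly (P * Q) t \<noteq> 0" using poly_all_0_iff_0 by (metis mult_eq_0_iff)
  then show ?thesis using that[of "seg t"] P Q by simp
qed

definition poly_open :: "nat \<Rightarrow> (nat \<Rightarrow> complex^3) set \<Rightarrow> bool" where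
  "poly_open n U \<longleftrightarrow> (\<forall>y\<in>U. \<exists>g\<in>polyfun n. g y \<noteq> 0 \<and> (\<forall>z. g z \<noteq> 0 \<longrightarrow> z \<in> U))"


lemma poly_open_nonzero:
  assumes "f \<in> polyfun n"
  shows "poly_open n {y. f y \<noteq> 0}"
  unfolding poly_open_def
proof
  fix y assume "y \<in> {y. f y \<noteq> 0}"
  then show "\<exists>g\<in>polyfun n. g y \<noteq> 0 \<and> (\<forall>z. g z \<noteq> 0 \<longrightarrow> z \<in> {y. f y \<noteq> 0})"
    using assms by (intro bexI[of _ f] conjI allI impI) simp_all
qed

lemma poly_open_vec_nonzero:
  assumes "polyvec n u"
  shows "poly_open n {y. u y \<noteq> 0}"
  unfolding poly_open_def
proof
  fix y assume "y \<in> {y. u y \<noteq> 0}"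
  then obtain j where "u y $ j \<noteq> 0" by (auto simp: vec_eq_iff)
  moreover have "\<forall>z. u z $ j \<noteq> 0 \<longrightarrow> z \<in> {y. u y \<noteq> 0}" by auto
  moreover have "(\<lambda>z. u z $ j) \<in> polyfun n" using assms unfolding polyvec_def by blast
  ultimately show "\<exists>g\<in>polyfun n. g y \<noteq> 0 \<and> (\<forall>z. g z \<noteq> 0 \<longrightarrow> z \<in> {y. u y \<noteq> 0})"
    by (intro bexI[of _ "\<lambda>z. u z $ j"] conjI)
qed

lemma poly_open_INT:
  assumes "finite S" "\<And>c. c \<in> S \<Longrightarrow> poly_open n (U c)"
  shows "poly_open n (\<Inter>c\<in>S. U c)"
  unfolding poly_open_def
proof
  fix y assume y: "y \<in> (\<Inter>c\<in>S. U c)"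
  have "\<forall>c\<in>S. \<exists>g. g \<in> polyfun n \<and> g y \<noteq> 0 \<and> (\<forall>z. g z \<noteq> 0 \<longrightarrow> z \<in> U c)"
  proof
    fix c assume c: "c \<in> S"
    then have "y \<in> U c" using y by simp
    from bspec[OF assms(2)[OF c, unfolded poly_open_def] this]
    show "\<exists>g. g \<in> polyfun n \<and> g y \<noteq> 0 \<and> (\<forall>z. g z \<noteq> 0 \<longrightarrow> z \<in> U c)"
      unfolding Bex_def .
  qed
  from bchoice[OF this] obtain g
    where g: "\<forall>c\<in>S. g c \<in> polyfun n \<and> g c y \<noteq> 0 \<and> (\<forall>z. g c z \<noteq> 0 \<longrightarrow> z \<in> U c)"
    by (elim exE)
  have "(\<lambda>z. \<Prod>c\<in>S. g c z) \<in> polyfun n" by (rule polyfun_prod[OF assms(1)]) (use g in blast)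
  moreover have "(\<Prod>c\<in>S. g c y) \<noteq> 0" using g by (simp add: prod_zero_iff[OF assms(1)])
  moreover have "z \<in> (\<Inter>c\<in>S. U c)" if "(\<Prod>c\<in>S. g c z) \<noteq> 0" for z
    using that g by (simp add: prod_zero_iff[OF assms(1)])
  ultimately show "\<exists>g\<in>polyfun n. g y \<noteq> 0 \<and> (\<forall>z. g z \<noteq> 0 \<longrightarrow> z \<in> (\<Inter>c\<in>S. U c))"
    by (intro bexI[of _ "\<lambda>z. \<Prod>c\<in>S. g c z"] conjI allI impI)
qed

lemma poly_open_Int: "poly_open n U \<Longrightarrow> poly_open n V \<Longrightarrow> poly_open n (U \<inter> V)"
  using poly_open_INT[of "{True, False}" n "\<lambda>b. if b then U else V"] by (simp add: Int_commute)

section \<open>Images of open parameter sets are irreducible\<close>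

definition proj_tuple :: "nat \<Rightarrow> (nat \<Rightarrow> complex^3) \<Rightarrow> nat \<Rightarrow> (complex^3) set" where
  "proj_tuple n v = restrict (\<lambda>t. pclass (v t)) {1..n}"

lemma proj_tuple_in_PiE: "(\<And>t. t \<in> {1..n} \<Longrightarrow> v t \<noteq> 0) \<Longrightarrow> proj_tuple n v \<in> PiE {1..n} (\<lambda>_. P2)"
  unfolding proj_tuple_def by (simp add: pclass_in_P2)

lemma multihom_rescale:
  assumes "multihom n f" "\<forall>i\<in>{1..n}. \<exists>c. c \<noteq> 0 \<and> x i = c *s z i" "f x \<noteq> 0"
  shows "f z \<noteq> 0"
proof -
  from assms(1) obtain d where fp: "f \<in> polyfun n" and
    d: "\<And>x (l :: nat \<Rightarrow> complex). (\<forall>i\<in>{1..n}. l i \<noteq> 0) \<Longrightarrow>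
        f (\<lambda>i. l i *s x i) = (\<Prod>i\<in>{1..n}. l i ^ d i) * f x"
    unfolding multihom_def by blast
  from assms(2) obtain c where c: "\<forall>i\<in>{1..n}. c i \<noteq> 0 \<and> x i = c i *s z i" by metis
  define l where "l i = (if i \<in> {1..n} then c i else 1)" for i
  have l: "\<forall>i\<in>{1..n}. l i \<noteq> 0" using c by (simp add: l_def)
  have "f x = f (\<lambda>i. l i *s z i)" using c by (intro polyfun_cong[OF fp]) (simp add: l_def)
  also have "\<dots> = (\<Prod>i\<in>{1..n}. l i ^ d i) * f z" using d l by blast
  finally show ?thesis using assms(3) by auto
qed

lemma zariski_closed_separating_poly:
  assumes "zariski_closed n C" "\<And>t. t \<in> {1..n} \<Longrightarrow> v t \<noteq> 0" "proj_tuple n v \<notin> C"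
  obtains f where "f \<in> polyfun n" "f v \<noteq> 0" "\<And>w. proj_tuple n w \<in> C \<Longrightarrow> f w = 0"
proof -
  obtain F where F: "\<forall>f\<in>F. multihom n f" and
    C: "C = {G \<in> PiE {1..n} (\<lambda>_. P2). \<forall>f\<in>F. \<forall>x. (\<forall>i\<in>{1..n}. x i \<in> G i) \<longrightarrow> f x = 0}"
    using assms(1) unfolding zariski_closed_def by blast
  obtain f x where f: "f \<in> F" and x: "\<forall>i\<in>{1..n}. x i \<in> proj_tuple n v i" and fx: "f x \<noteq> 0"
    using assms(3) proj_tuple_in_PiE[of n v] assms(2) unfolding C by blast
  have "\<forall>i\<in>{1..n}. \<exists>c. c \<noteq> 0 \<and> x i = c *s v i"
    using x by (auto simp: proj_tuple_def in_pclass)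
  then have "f v \<noteq> 0" using multihom_rescale F f fx by blast
  moreover have "f \<in> polyfun n" using F f unfolding multihom_def by blast
  moreover have "f w = 0" if "proj_tuple n w \<in> C" for w
  proof -
    have "\<forall>i\<in>{1..n}. w i \<in> proj_tuple n w i" by (simp add: proj_tuple_def self_in_pclass)
    then show ?thesis using that f unfolding C by blast
  qed
  ultimately show ?thesis using that by blast
qed

(* The image of a nonempty Zariski open set of parameters under a polynomial map to
   ((P^2)^* )^n is irreducible, because the ring of polynomial functions is a domain. *)
theorem zariski_irreducible_polynomial_image:
  assumes poly: "\<And>i. i \<in> {1..n} \<Longrightarrow> polyvec n (\<lambda>y. \<psi> y i)"
    and U: "poly_open n U" "U \<noteq> {}"
    and nonzero: "\<And>y t. y \<in> U \<Longrightarrow> t \<in> {1..n} \<Longrightarrow> \<psi> y t \<noteq> 0"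
  shows "zariski_irreducible n ((\<lambda>y. proj_tuple n (\<psi> y)) ` U)"
  unfolding zariski_irreducible_def
proof (intro conjI allI impI)
  let ?S = "(\<lambda>y. proj_tuple n (\<psi> y)) ` U"
  show "?S \<noteq> {}" using U(2) by blast
  show "?S \<subseteq> PiE {1..n} (\<lambda>_. P2)" using proj_tuple_in_PiE nonzero by blast
  fix C1 C2
  assume C: "zariski_closed n C1 \<and> zariski_closed n C2 \<and> ?S \<subseteq> C1 \<union> C2"
  show "?S \<subseteq> C1 \<or> ?S \<subseteq> C2"
  proof (rule ccontr)
    assume "\<not> (?S \<subseteq> C1 \<or> ?S \<subseteq> C2)"
    then obtain y1 y2 where y: "y1 \<in> U" "proj_tuple n (\<psi> y1) \<notin> C1"
      "y2 \<in> U" "proj_tuple n (\<psi> y2) \<notin> C2" by blast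
    have "zariski_closed n C1" "zariski_closed n C2" using C by simp_all
    obtain f1 where f1: "f1 \<in> polyfun n" "f1 (\<psi> y1) \<noteq> 0" "\<And>w. proj_tuple n w \<in> C1 \<Longrightarrow> f1 w = 0"
      using zariski_closed_separating_poly[OF \<open>zariski_closed n C1\<close> nonzero[OF y(1)] y(2)] by blast
    obtain f2 where f2: "f2 \<in> polyfun n" "f2 (\<psi> y2) \<noteq> 0" "\<And>w. proj_tuple n w \<in> C2 \<Longrightarrow> f2 w = 0"
      using zariski_closed_separating_poly[OF \<open>zariski_closed n C2\<close> nonzero[OF y(3)] y(4)] by blast
    obtain g where g: "g \<in> polyfun n" "g y1 \<noteq> 0" "\<forall>z. g z \<noteq> 0 \<longrightarrow> z \<in> U"
      using bspec[OF U(1)[unfolded poly_open_def] y(1)] by (elim bexE conjE)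
    have F1: "(\<lambda>y. f1 (\<psi> y)) \<in> polyfun n" by (rule polyfun_comp[OF f1(1) poly])
    have F2: "(\<lambda>y. f2 (\<psi> y)) \<in> polyfun n" by (rule polyfun_comp[OF f2(1) poly])
    obtain z where "f1 (\<psi> z) * f2 (\<psi> z) \<noteq> 0"
      by (rule polyfun_mult_nonzero[OF F1 F2 f1(2) f2(2)])
    then obtain w where w: "f1 (\<psi> w) * f2 (\<psi> w) * g w \<noteq> 0"
      by (rule polyfun_mult_nonzero[OF polyfun.pmult[OF F1 F2] g(1) _ g(2)])
    then have "proj_tuple n (\<psi> w) \<in> C1 \<union> C2" using g(3) C by auto
    then show False using f1(3) f2(3) w by auto
  qed
qed

definition represents :: "nat \<Rightarrow> nat set set \<Rightarrow> (nat \<Rightarrow> complex^3) \<Rightarrow> bool" where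
  "represents n I g \<longleftrightarrow> (\<forall>t\<in>{1..n}. g t \<noteq> 0) \<and>
     (\<forall>i\<in>{1..n}. \<forall>j\<in>{1..n}. i \<noteq> j \<longrightarrow> cross (g i) (g j) \<noteq> 0) \<and>
     (\<forall>i\<in>{1..n}. \<forall>j\<in>{1..n}. \<forall>k\<in>{1..n}. i \<noteq> j \<and> i \<noteq> k \<and> j \<noteq> k \<longrightarrow>
        (triple (g i) (g j) (g k) = 0 \<longleftrightarrow> {i, j, k} \<in> I))"

lemma represents_in_realization_space:
  assumes "represents n I g"
  shows "proj_tuple n g \<in> realization_space n I"
  using assms proj_tuple_in_PiE[of n g]
  unfolding realization_space_def represents_def
  by (auto simp: proj_tuple_def pclass_eq_iff det_zero_pclass)

lemma realization_space_represented:
  assumes "G \<in> realization_space n I"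
  shows "represents n I (\<lambda>t. rep (G t))" "proj_tuple n (\<lambda>t. rep (G t)) = G"
proof -
  have G: "G \<in> PiE {1..n} (\<lambda>_. P2)" "\<forall>i\<in>{1..n}. \<forall>j\<in>{1..n}. i \<noteq> j \<longrightarrow> G i \<noteq> G j"
    "\<forall>i\<in>{1..n}. \<forall>j\<in>{1..n}. \<forall>k\<in>{1..n}. i \<noteq> j \<and> i \<noteq> k \<and> j \<noteq> k \<longrightarrow>
       (det_zero (G i) (G j) (G k) \<longleftrightarrow> {i, j, k} \<in> I)"
    using assms unfolding realization_space_def by auto
  have r: "rep (G t) \<noteq> 0" "G t = pclass (rep (G t))" if "t \<in> {1..n}" for t
    using rep[of "G t"] G(1) that by (auto simp: PiE_iff)
  show "represents n I (\<lambda>t. rep (G t))"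
    unfolding represents_def
  proof (intro conjI ballI impI)
    fix i j assume ij: "i \<in> {1..n}" "j \<in> {1..n}" "i \<noteq> j"
    then have "pclass (rep (G i)) \<noteq> pclass (rep (G j))" using G(2) r by metis
    then show "cross (rep (G i)) (rep (G j)) \<noteq> 0" using ij r pclass_eq_iff by blast
  next
    fix i j k assume ijk: "i \<in> {1..n}" "j \<in> {1..n}" "k \<in> {1..n}" "i \<noteq> j \<and> i \<noteq> k \<and> j \<noteq> k"
    then have "det_zero (pclass (rep (G i))) (pclass (rep (G j))) (pclass (rep (G k))) \<longleftrightarrow> {i, j, k} \<in> I"
      using G(3) r by metis
    then show "triple (rep (G i)) (rep (G j)) (rep (G k)) = 0 \<longleftrightarrow> {i, j, k} \<in> I"
      by (simp add: det_zero_pclass)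
  qed (use r in auto)
  show "proj_tuple n (\<lambda>t. rep (G t)) = G"
  proof
    fix t
    show "proj_tuple n (\<lambda>t. rep (G t)) t = G t"
    proof (cases "t \<in> {1..n}")
      case True
      then show ?thesis using r(2)[OF True, symmetric] by (simp add: proj_tuple_def)
    next
      case False
      then show ?thesis
        unfolding proj_tuple_def restrict_def if_not_P[OF False] using PiE_arb[OF G(1) False] by simp
    qed
  qed
qed

lemma represents_rescale:
  assumes "represents n I g" "\<And>t. t \<in> {1..n} \<Longrightarrow> c t \<noteq> 0 \<and> v t = c t *s g t"
  shows "represents n I v" "proj_tuple n v = proj_tuple n g"
proof -
  show "represents n I v" using assms by (auto simp: represents_def)
  have "pclass (v t) = pclass (g t)" if "t \<in> {1..n}" for t
    using assms(2)[OF that] pclass_smult by metis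
  then show "proj_tuple n v = proj_tuple n g" unfolding proj_tuple_def by (rule restrict_ext)
qed

definition meet :: "(nat \<Rightarrow> complex^3) \<Rightarrow> nat \<times> nat \<Rightarrow> complex^3" where
  "meet g q = cross (g (fst q)) (g (snd q))"

lemma bdot_meet [simp]:
  "bdot (meet g q) (g (fst q)) = 0" "bdot (meet g q) (g (snd q)) = 0"
  "bdot (g (fst q)) (meet g q) = 0" "bdot (g (snd q)) (meet g q) = 0"
  by (simp_all add: meet_def bdot_commute)

lemma meet_rescale:
  "v (fst q) = a *s g (fst q) \<Longrightarrow> v (snd q) = b *s g (snd q) \<Longrightarrow> meet v q = (a * b) *s meet g q"
  by (simp add: meet_def vec3_eq_iff algebra_simps)

definition earlier_pairs :: "nat set set \<Rightarrow> nat \<Rightarrow> (nat \<times> nat) set" where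
  "earlier_pairs I t = {(a, b). a \<in> {1..<t} \<and> b \<in> {1..<t} \<and> a \<noteq> b \<and> {a, b, t} \<in> I}"

(* Line x passes through the intersection point of the pair q (according to I). *)
definition through :: "nat set set \<Rightarrow> nat \<times> nat \<Rightarrow> nat \<Rightarrow> bool" where
  "through I q x \<longleftrightarrow> x = fst q \<or> x = snd q \<or> {fst q, snd q, x} \<in> I"

(* The pairs q and r meet in different points: some line of r misses the point of q. *)
definition separated :: "nat set set \<Rightarrow> nat \<times> nat \<Rightarrow> nat \<times> nat \<Rightarrow> bool" where
  "separated I q r \<longleftrightarrow> (\<exists>x\<in>{fst r, snd r}. \<not> through I q x)"

lemma earlier_pairsD:
  "q \<in> earlier_pairs I t \<Longrightarrow> fst q \<in> {1..<t} \<and> snd q \<in> {1..<t} \<and> fst q \<noteq> snd q \<and> {fst q, snd q, t} \<in> I"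
  by (auto simp: earlier_pairs_def)

context
  fixes n I g t
  assumes g: "represents n I g" and t: "t \<in> {1..n}"
begin

lemma meet_nonzero: "q \<in> earlier_pairs I t \<Longrightarrow> meet g q \<noteq> 0"
  using g t earlier_pairsD[of q I t] unfolding represents_def meet_def by auto

lemma through_iff:
  assumes q: "q \<in> earlier_pairs I t" and x: "x \<in> {1..n}"
  shows "through I q x \<longleftrightarrow> bdot (meet g q) (g x) = 0"
proof (cases "x = fst q \<or> x = snd q")
  case True
  then show ?thesis unfolding through_def by auto
next
  case False
  then have "{fst q, snd q, x} \<in> I \<longleftrightarrow> triple (g (fst q)) (g (snd q)) (g x) = 0"
    using g t x earlier_pairsD[OF q] unfolding represents_def by auto
  then show ?thesis using False unfolding through_def meet_def triple_def by auto
qed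

lemma meet_on_line: "q \<in> earlier_pairs I t \<Longrightarrow> bdot (meet g q) (g t) = 0"
  using through_iff[of q t] t earlier_pairsD[of q I t] unfolding through_def by auto

lemma separated_iff:
  assumes q: "q \<in> earlier_pairs I t" and r: "r \<in> earlier_pairs I t"
  shows "separated I q r \<longleftrightarrow> cross (meet g q) (meet g r) \<noteq> 0"
proof
  assume "separated I q r"
  then obtain x where x: "x \<in> {fst r, snd r}" "\<not> through I q x" unfolding separated_def by blast
  have "x \<in> {1..n}" using x(1) earlier_pairsD[OF r] t by auto
  then have qx: "bdot (meet g q) (g x) \<noteq> 0" using through_iff[OF q] x(2) by simp
  show "cross (meet g q) (meet g r) \<noteq> 0"
  proof
    assume "cross (meet g q) (meet g r) = 0"
    then obtain e where "meet g r = e *s meet g q" using cross_eq_0_proportional meet_nonzero[OF q] by blast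
    moreover have "bdot (meet g r) (g x) = 0" using x(1) by auto
    moreover have "e \<noteq> 0" using calculation(1) meet_nonzero[OF r] by auto
    ultimately show False using qx by simp
  qed
next
  assume "cross (meet g q) (meet g r) \<noteq> 0"
  show "separated I q r"
  proof (rule ccontr)
    assume "\<not> separated I q r"
    then have "through I q (fst r)" "through I q (snd r)" unfolding separated_def by auto
    moreover have "fst r \<in> {1..n}" "snd r \<in> {1..n}" "fst r \<noteq> snd r" using earlier_pairsD[OF r] t by auto
    ultimately have "bdot (g (fst r)) (meet g q) = 0" "bdot (g (snd r)) (meet g q) = 0"
      and "cross (g (fst r)) (g (snd r)) \<noteq> 0"
      using through_iff[OF q] g unfolding represents_def by (auto simp: bdot_commute)
    then obtain c where "meet g q = c *s meet g r" using orthogonal_to_two unfolding meet_def by blast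
    then show False using \<open>cross (meet g q) (meet g r) \<noteq> 0\<close> by simp
  qed
qed

end

(* A good choice for line t: k \<le> 2 is the number of intersection points of earlier lines that
   lie on line t; a (and b) are pairs of earlier lines meeting there, and every earlier pair
   concurrent with line t meets in one of these points. *)
definition good_choice :: "nat set set \<Rightarrow> nat \<Rightarrow> nat \<Rightarrow> nat \<times> nat \<Rightarrow> nat \<times> nat \<Rightarrow> bool" where
  "good_choice I t k a b \<longleftrightarrow> k \<le> 2 \<and> (k \<ge> 1 \<longrightarrow> a \<in> earlier_pairs I t) \<and>
     (k = 2 \<longrightarrow> b \<in> earlier_pairs I t \<and> separated I a b) \<and>
     (\<forall>q\<in>earlier_pairs I t. (k \<ge> 1 \<and> through I a (fst q) \<and> through I a (snd q)) \<or>
                             (k = 2 \<and> through I b (fst q) \<and> through I b (snd q)))"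

section \<open>The parametrization\<close>

function param :: "(nat \<Rightarrow> nat) \<Rightarrow> (nat \<Rightarrow> nat \<times> nat) \<Rightarrow> (nat \<Rightarrow> nat \<times> nat) \<Rightarrow>
    (nat \<Rightarrow> complex^3) \<Rightarrow> nat \<Rightarrow> complex^3" where
  "param K A B y t = (if K t = 0 then y t
     else if K t = 1 then
       (if fst (A t) < t \<and> snd (A t) < t
        then cross (cross (param K A B y (fst (A t))) (param K A B y (snd (A t)))) (y t) else 0)
     else (if fst (A t) < t \<and> snd (A t) < t \<and> fst (B t) < t \<and> snd (B t) < t
        then cross (cross (param K A B y (fst (A t))) (param K A B y (snd (A t))))
                   (cross (param K A B y (fst (B t))) (param K A B y (snd (B t)))) else 0))"
  by pat_completeness auto
termination by (relation "Wellfounded.measure (\<lambda>(K, A, B, y, t). t)") auto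

declare param.simps [simp del]

locale parametrization =
  fixes n :: nat and I :: "nat set set" and K :: "nat \<Rightarrow> nat" and A B :: "nat \<Rightarrow> nat \<times> nat"
  assumes good: "\<And>t. t \<in> {1..n} \<Longrightarrow> good_choice I t (K t) (A t) (B t)"
begin

abbreviation ph :: "(nat \<Rightarrow> complex^3) \<Rightarrow> nat \<Rightarrow> complex^3" where
  "ph \<equiv> param K A B"

lemma good_cases:
  assumes "t \<in> {1..n}"
  obtains "K t = 0"
  | "K t = 1" "A t \<in> earlier_pairs I t"
  | "K t = 2" "A t \<in> earlier_pairs I t" "B t \<in> earlier_pairs I t" "separated I (A t) (B t)"
proof -
  have g: "good_choice I t (K t) (A t) (B t)" using good[OF assms] .
  consider "K t = 0" | "K t = 1" | "K t = 2" using g unfolding good_choice_def by linarith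
  then show ?thesis
  proof cases
    case 1
    then show ?thesis by (rule that(1))
  next
    case 2
    then show ?thesis using g unfolding good_choice_def by (intro that(2)) simp_all
  next
    case 3
    then show ?thesis using g unfolding good_choice_def by (intro that(3)) simp_all
  qed
qed

lemma param_pencil:
  assumes "t \<in> {1..n}" "K t = 1"
  shows "ph y t = cross (meet (ph y) (A t)) (y t)"
proof -
  have "A t \<in> earlier_pairs I t" using good[OF assms(1)] assms(2) unfolding good_choice_def by simp
  then have "fst (A t) < t" "snd (A t) < t" using earlier_pairsD by fastforce+
  then show ?thesis using assms(2) by (subst param.simps) (simp add: meet_def)
qed

lemma param_joined:
  assumes "t \<in> {1..n}" "K t = 2"
  shows "ph y t = cross (meet (ph y) (A t)) (meet (ph y) (B t))"
proof -
  have "A t \<in> earlier_pairs I t" "B t \<in> earlier_pairs I t"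
    using good[OF assms(1)] assms(2) unfolding good_choice_def by simp_all
  then have "fst (A t) < t" "snd (A t) < t" "fst (B t) < t" "snd (B t) < t"
    using earlier_pairsD by fastforce+
  then show ?thesis using assms(2) by (subst param.simps) (simp add: meet_def)
qed

lemma param_free: "K t = 0 \<Longrightarrow> ph y t = y t"
  by (subst param.simps) simp

lemma earlier_pair_in_range:
  "t \<in> {1..n} \<Longrightarrow> q \<in> earlier_pairs I t \<Longrightarrow> fst q \<in> {1..n} \<and> snd q \<in> {1..n} \<and> fst q < t \<and> snd q < t"
  using earlier_pairsD[of q I t] by auto

lemma param_polyvec: "t \<in> {1..n} \<Longrightarrow> polyvec n (\<lambda>y. ph y t)"
proof (induction t rule: less_induct)
  case (less t)
  have meet_poly: "polyvec n (\<lambda>y. meet (ph y) q)" if "q \<in> earlier_pairs I t" for q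
    unfolding meet_def using earlier_pair_in_range[OF less.prems that]
    by (intro polyvec_cross less.IH) auto
  from less.prems show ?case
  proof (cases rule: good_cases)
    case 1
    then show ?thesis using less.prems by (simp add: param_free polyvec_coord)
  next
    case 2
    then show ?thesis using less.prems by (simp add: param_pencil polyvec_cross meet_poly polyvec_coord)
  next
    case 3
    then show ?thesis using less.prems by (simp add: param_joined polyvec_cross meet_poly)
  qed
qed

lemma param_through_chosen:
  assumes t: "t \<in> {1..n}" and r: "r = A t \<and> K t \<ge> 1 \<or> r = B t \<and> K t = 2"
  shows "bdot (meet (ph y) r) (ph y t) = 0"
  using t
proof (cases rule: good_cases)
  case 1
  then show ?thesis using r by simp
next
  case 2
  then show ?thesis using r t by (simp add: param_pencil bdot_commute)
next
  case 3
  then show ?thesis using r t by (auto simp: param_joined bdot_commute)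
qed

(* Induction step for concurrency: if all incident triples among lines before t are concurrent,
   so is every triple formed by an earlier pair with line t, since both its lines pass through
   one of the points chosen on line t. *)
lemma earlier_pair_concurrent:
  assumes cross_nz: "\<And>i j. i \<in> {1..n} \<Longrightarrow> j \<in> {1..n} \<Longrightarrow> i \<noteq> j \<Longrightarrow> cross (ph y i) (ph y j) \<noteq> 0"
    and t: "t \<in> {1..n}"
    and below: "\<And>a b x. a \<in> {1..<t} \<Longrightarrow> b \<in> {1..<t} \<Longrightarrow> x \<in> {1..<t} \<Longrightarrow>
                  a \<noteq> b \<Longrightarrow> a \<noteq> x \<Longrightarrow> b \<noteq> x \<Longrightarrow> {a, b, x} \<in> I \<Longrightarrow>
                  triple (ph y a) (ph y b) (ph y x) = 0"
    and q: "(i, j) \<in> earlier_pairs I t"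
  shows "triple (ph y i) (ph y j) (ph y t) = 0"
proof -
  have g: "good_choice I t (K t) (A t) (B t)" using good t .
  then obtain r where r: "r = A t \<and> K t \<ge> 1 \<or> r = B t \<and> K t = 2"
    and through_i: "through I r i" and through_j: "through I r j"
    using q unfolding good_choice_def by fastforce
  have rq: "r \<in> earlier_pairs I t" using r g unfolding good_choice_def by auto
  note r_range = earlier_pair_in_range[OF t rq] and q_range = earlier_pair_in_range[OF t q]
  define p where "p = meet (ph y) r"
  have "p \<noteq> 0" unfolding p_def meet_def using cross_nz r_range earlier_pairsD[OF rq] by auto
  have on_p: "bdot (ph y x) p = 0" if x: "through I r x" "x \<in> {1..<t}" for x
  proof -
    consider "x = fst r \<or> x = snd r" | "x \<noteq> fst r" "x \<noteq> snd r" "{fst r, snd r, x} \<in> I"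
      using x(1) unfolding through_def by blast
    then show ?thesis
    proof cases
      case 1
      then show ?thesis by (auto simp: p_def bdot_commute)
    next
      case 2
      then have "triple (ph y (fst r)) (ph y (snd r)) (ph y x) = 0"
        using below r_range x(2) earlier_pairsD[OF rq] by simp
      then show ?thesis by (simp add: p_def meet_def triple_def bdot_commute)
    qed
  qed
  show ?thesis
  proof (rule common_point_triple_zero[OF \<open>p \<noteq> 0\<close>])
    show "bdot (ph y i) p = 0" "bdot (ph y j) p = 0"
      using on_p through_i through_j q_range by simp_all
    show "bdot (ph y t) p = 0" using param_through_chosen[OF t r] by (simp add: p_def bdot_commute)
    show "cross (ph y i) (ph y j) \<noteq> 0" using cross_nz q_range earlier_pairsD[OF q] by simp
  qed
qed

lemma incident_triples_concurrent:
  assumes cross_nz: "\<And>i j. i \<in> {1..n} \<Longrightarrow> j \<in> {1..n} \<Longrightarrow> i \<noteq> j \<Longrightarrow> cross (ph y i) (ph y j) \<noteq> 0"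
    and abx: "a \<in> {1..n}" "b \<in> {1..n}" "x \<in> {1..n}" "a \<noteq> b" "a \<noteq> x" "b \<noteq> x" "{a, b, x} \<in> I"
  shows "triple (ph y a) (ph y b) (ph y x) = 0"
proof -
  define below where "below m \<longleftrightarrow> (\<forall>a\<in>{1..<m}. \<forall>b\<in>{1..<m}. \<forall>x\<in>{1..<m}.
      a \<noteq> b \<and> a \<noteq> x \<and> b \<noteq> x \<and> {a, b, x} \<in> I \<longrightarrow> triple (ph y a) (ph y b) (ph y x) = 0)" for m
  have "below (Suc m)" if "m \<le> n" for m
    using that
  proof (induction m)
    case 0
    show ?case by (simp add: below_def)
  next
    case (Suc m)
    define t where "t = Suc m"
    have t: "t \<in> {1..n}" using Suc.prems by (simp add: t_def)
    have IH: "triple (ph y a) (ph y b) (ph y x) = 0"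
      if "a \<in> {1..<t}" "b \<in> {1..<t}" "x \<in> {1..<t}" "a \<noteq> b" "a \<noteq> x" "b \<noteq> x" "{a, b, x} \<in> I"
      for a b x
      using Suc that unfolding below_def t_def by simp
    have pair: "triple (ph y i) (ph y j) (ph y t) = 0" if "(i, j) \<in> earlier_pairs I t" for i j
      using earlier_pair_concurrent[OF cross_nz t IH that] by blast
    show ?case
      unfolding below_def t_def[symmetric]
    proof (intro ballI impI)
      fix a b x assume abx: "a \<in> {1..<Suc t}" "b \<in> {1..<Suc t}" "x \<in> {1..<Suc t}"
        and d: "a \<noteq> b \<and> a \<noteq> x \<and> b \<noteq> x \<and> {a, b, x} \<in> I"
      consider "a < t" "b < t" "x < t" | "x = t" | "a = t" | "b = t" using abx by fastforce
      then show "triple (ph y a) (ph y b) (ph y x) = 0"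
      proof cases
        case 1
        then show ?thesis using IH abx d by simp
      next
        case 2
        then show ?thesis using pair[of a b] abx d by (simp add: earlier_pairs_def)
      next
        case 3
        then have "{b, x, t} \<in> I" using d by (simp add: insert_commute)
        then have "triple (ph y b) (ph y x) (ph y a) = 0" using pair[of b x] abx d 3 by (simp add: earlier_pairs_def)
        then show ?thesis by (simp add: triple_cycle[of "ph y a"])
      next
        case 4
        then have "{x, a, t} \<in> I" using d by (simp add: insert_commute)
        then have "triple (ph y x) (ph y a) (ph y b) = 0" using pair[of x a] abx d 4 by (simp add: earlier_pairs_def)
        then show ?thesis by (simp add: triple_cycle[of "ph y x"])
      qed
    qed
  qed
  then show ?thesis using abx unfolding below_def by (metis atLeastAtMost_iff atLeastLessThan_iff less_Suc_eq_le order_refl)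
qed

(* The open conditions (nonzero, pairwise distinct, non-incident triples non-concurrent) already
   force the parameters to represent a realization of I. *)
lemma param_represents:
  assumes "\<And>t. t \<in> {1..n} \<Longrightarrow> ph y t \<noteq> 0"
    and "\<And>i j. i \<in> {1..n} \<Longrightarrow> j \<in> {1..n} \<Longrightarrow> i \<noteq> j \<Longrightarrow> cross (ph y i) (ph y j) \<noteq> 0"
    and "\<And>i j k. i \<in> {1..n} \<Longrightarrow> j \<in> {1..n} \<Longrightarrow> k \<in> {1..n} \<Longrightarrow> i \<noteq> j \<Longrightarrow> i \<noteq> k \<Longrightarrow> j \<noteq> k \<Longrightarrow>
           {i, j, k} \<notin> I \<Longrightarrow> triple (ph y i) (ph y j) (ph y k) \<noteq> 0"
  shows "represents n I (ph y)"
  using assms incident_triples_concurrent[OF assms(2)] unfolding represents_def by blast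

definition U :: "(nat \<Rightarrow> complex^3) set" where
  "U = {y. represents n I (ph y)}"

lemma U_poly_open: "poly_open n U"
proof -
  define S2 where "S2 = {(i, j). i \<in> {1..n} \<and> j \<in> {1..n} \<and> i \<noteq> j}"
  define S3 where "S3 = {(i, j, k). i \<in> {1..n} \<and> j \<in> {1..n} \<and> k \<in> {1..n} \<and>
      i \<noteq> j \<and> i \<noteq> k \<and> j \<noteq> k \<and> {i, j, k} \<notin> I}"
  have "finite S2" by (rule finite_subset[of _ "{1..n} \<times> {1..n}"]) (auto simp: S2_def)
  have "finite S3" by (rule finite_subset[of _ "{1..n} \<times> {1..n} \<times> {1..n}"]) (auto simp: S3_def)
  have U_eq: "U = (\<Inter>t\<in>{1..n}. {y. ph y t \<noteq> 0}) \<inter>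
      (\<Inter>p\<in>S2. {y. cross (ph y (fst p)) (ph y (snd p)) \<noteq> 0}) \<inter>
      (\<Inter>p\<in>S3. {y. triple (ph y (fst p)) (ph y (fst (snd p))) (ph y (snd (snd p))) \<noteq> 0})"
    (is "_ = ?W")
  proof
    show "U \<subseteq> ?W" unfolding U_def S2_def S3_def represents_def by auto
    show "?W \<subseteq> U"
    proof
      fix y assume "y \<in> ?W"
      then have "represents n I (ph y)" by (intro param_represents) (auto simp: S2_def S3_def)
      then show "y \<in> U" by (simp add: U_def)
    qed
  qed
  have poly: "polyvec n (\<lambda>y. ph y i)" if "i \<in> {1..n}" for i using param_polyvec that .
  show ?thesis
    unfolding U_eq
  proof (intro poly_open_Int poly_open_INT \<open>finite S2\<close> \<open>finite S3\<close> finite_atLeastAtMost)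
    show "poly_open n {y. ph y t \<noteq> 0}" if "t \<in> {1..n}" for t
      using poly_open_vec_nonzero poly that by blast
    show "poly_open n {y. cross (ph y (fst p)) (ph y (snd p)) \<noteq> 0}" if "p \<in> S2" for p
      using that by (intro poly_open_vec_nonzero polyvec_cross poly) (auto simp: S2_def)
    show "poly_open n {y. triple (ph y (fst p)) (ph y (fst (snd p))) (ph y (snd (snd p))) \<noteq> 0}"
      if "p \<in> S3" for p
      using that by (intro poly_open_nonzero polyfun_triple poly) (auto simp: S3_def)
  qed
qed

(* Parameters lifting given coordinates g: for K t = 1 the free point is chosen on line t so
   that joining it to meet (A t) reproduces line t. *)
definition lift :: "(nat \<Rightarrow> complex^3) \<Rightarrow> nat \<Rightarrow> complex^3" where
  "lift g t = (if K t = 1 then cross_solve (meet g (A t)) (g t) else g t)"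

lemma param_lift_proportional:
  assumes g: "represents n I g"
  shows "t \<in> {1..n} \<Longrightarrow> \<exists>c. c \<noteq> 0 \<and> ph (lift g) t = c *s g t"
proof (induction t rule: less_induct)
  case (less t)
  note t = less.prems
  have meet_prop: "\<exists>c. c \<noteq> 0 \<and> meet (ph (lift g)) q = c *s meet g q" if "q \<in> earlier_pairs I t" for q
  proof -
    note q = earlier_pair_in_range[OF t that]
    obtain a b where "a \<noteq> 0" "ph (lift g) (fst q) = a *s g (fst q)"
      "b \<noteq> 0" "ph (lift g) (snd q) = b *s g (snd q)" using less.IH q by meson
    then show ?thesis using meet_rescale by (intro exI[of _ "a * b"]) simp
  qed
  from t show ?case
  proof (cases rule: good_cases)
    case 1
    then show ?thesis by (intro exI[of _ 1]) (simp add: param_free lift_def)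
  next
    case 2
    obtain c where c: "c \<noteq> 0" "meet (ph (lift g)) (A t) = c *s meet g (A t)" using meet_prop 2 by blast
    have "ph (lift g) t = c *s cross (meet g (A t)) (cross_solve (meet g (A t)) (g t))"
      using 2 t c by (simp add: param_pencil lift_def)
    also have "\<dots> = c *s g t"
      using cross_cross_solve meet_nonzero[OF g t 2(2)] meet_on_line[OF g t 2(2)] by simp
    finally show ?thesis using c by blast
  next
    case 3
    obtain a where a: "a \<noteq> 0" "meet (ph (lift g)) (A t) = a *s meet g (A t)" using meet_prop 3 by blast
    obtain b where b: "b \<noteq> 0" "meet (ph (lift g)) (B t) = b *s meet g (B t)" using meet_prop 3 by blast
    have indep: "cross (meet g (A t)) (meet g (B t)) \<noteq> 0" using separated_iff[OF g t] 3 by blast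
    have "bdot (meet g (A t)) (g t) = 0" "bdot (meet g (B t)) (g t) = 0"
      using meet_on_line[OF g t] 3 by blast+
    then obtain e where e: "g t = e *s cross (meet g (A t)) (meet g (B t))"
      using orthogonal_to_two[OF indep] by blast
    have "e \<noteq> 0" using e g t unfolding represents_def by auto
    have "ph (lift g) t = (a * b) *s cross (meet g (A t)) (meet g (B t))"
      using 3 t a b by (simp add: param_joined)
    also have "\<dots> = (a * b / e) *s g t" using e \<open>e \<noteq> 0\<close> by (simp add: vec3_eq_iff)
    finally show ?thesis using a b \<open>e \<noteq> 0\<close> by (intro exI[of _ "a * b / e"]) simp
  qed
qed

lemma realization_space_eq_image:
  "realization_space n I = (\<lambda>y. proj_tuple n (ph y)) ` U"
proof
  show "(\<lambda>y. proj_tuple n (ph y)) ` U \<subseteq> realization_space n I"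
    using represents_in_realization_space unfolding U_def by blast
  show "realization_space n I \<subseteq> (\<lambda>y. proj_tuple n (ph y)) ` U"
  proof
    fix G assume "G \<in> realization_space n I"
    then have g: "represents n I (\<lambda>t. rep (G t))" and G: "proj_tuple n (\<lambda>t. rep (G t)) = G"
      by (rule realization_space_represented)+
    then have "\<forall>t\<in>{1..n}. \<exists>c. c \<noteq> 0 \<and> ph (lift (\<lambda>t. rep (G t))) t = c *s rep (G t)"
      using param_lift_proportional by blast
    then obtain c where "\<And>t. t \<in> {1..n} \<Longrightarrow> c t \<noteq> 0 \<and> ph (lift (\<lambda>t. rep (G t))) t = c t *s rep (G t)"
      by metis
    from represents_rescale[OF g this] G
    show "G \<in> (\<lambda>y. proj_tuple n (ph y)) ` U"
      unfolding U_def by (intro image_eqI[where x = "lift (\<lambda>t. rep (G t))"]) auto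
  qed
qed

end

context
  fixes n :: nat and H :: "nat \<Rightarrow> (complex^3) set"
  assumes lines: "\<forall>i\<in>{1..n}. H i \<in> P2" and distinct_lines: "inj_on H {1..n}"
begin

lemma rep_H: "m \<in> {1..n} \<Longrightarrow> rep (H m) \<noteq> 0 \<and> H m = pclass (rep (H m))"
  using rep[of "H m"] lines by auto

lemma on_line_H: "m \<in> {1..n} \<Longrightarrow> on_line (pclass x) (H m) \<longleftrightarrow> bdot (rep (H m)) x = 0"
  using on_line_pclass[of "rep (H m)" x] rep_H[of m] by simp

lemma arrangement_represents: "represents n (incidence n H) (\<lambda>t. rep (H t))"
  unfolding represents_def
proof (intro conjI ballI impI)
  fix i j assume ij: "i \<in> {1..n}" "j \<in> {1..n}" "i \<noteq> j"
  then have "H i \<noteq> H j" using distinct_lines unfolding inj_on_def by blast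
  then show "cross (rep (H i)) (rep (H j)) \<noteq> 0" using rep_H ij pclass_eq_iff by metis
next
  fix i j k assume r: "i \<in> {1..n}" "j \<in> {1..n}" "k \<in> {1..n}" and d: "i \<noteq> j \<and> i \<noteq> k \<and> j \<noteq> k"
  define h where "h m = rep (H m)" for m
  have cij: "cross (h i) (h j) \<noteq> 0"
    using d r distinct_lines rep_H pclass_eq_iff unfolding h_def inj_on_def by metis
  show "triple (rep (H i)) (rep (H j)) (rep (H k)) = 0 \<longleftrightarrow> {i, j, k} \<in> incidence n H"
    unfolding h_def[symmetric]
  proof
    assume t: "triple (h i) (h j) (h k) = 0"
    define p where "p = pclass (cross (h i) (h j))"
    have "p \<in> P2" using cij pclass_in_P2 p_def by simp
    moreover have "on_line p (H i)" "on_line p (H j)" using on_line_H r by (simp_all add: p_def h_def)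
    moreover have "on_line p (H k)" using on_line_H r t by (simp add: p_def h_def triple_def bdot_commute)
    ultimately show "{i, j, k} \<in> incidence n H" unfolding incidence_def using r d by blast
  next
    assume "{i, j, k} \<in> incidence n H"
    then obtain i' j' k' p where e: "{i, j, k} = {i', j', k'}" and p: "p \<in> P2"
      and o: "on_line p (H i')" "on_line p (H j')" "on_line p (H k')"
      unfolding incidence_def by blast
    obtain x where x: "x \<noteq> 0" "p = pclass x" using p unfolding P2_def pclass_def by blast
    have "bdot (h m) x = 0" if m: "m \<in> {i, j, k}" for m
    proof -
      have "on_line (pclass x) (H m)" using m e o x(2) by auto
      moreover have "m \<in> {1..n}" using m r by auto
      ultimately show ?thesis using on_line_H unfolding h_def by blast
    qed
    then show "triple (h i) (h j) (h k) = 0" using common_point_triple_zero[OF x(1) _ _ _ cij] by simp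
  qed
qed (use rep_H in auto)

lemma meet_mult_point:
  assumes t: "t \<in> {1..n}" and q: "q \<in> earlier_pairs (incidence n H) t"
  shows "pclass (meet (\<lambda>t. rep (H t)) q) \<in> line_points (H t) \<inter> mult_pts t H"
proof -
  let ?p = "pclass (meet (\<lambda>t. rep (H t)) q)"
  note h = arrangement_represents
  note r = earlier_pairsD[OF q]
  have "?p \<in> P2" using meet_nonzero[OF h t q] pclass_in_P2 by blast
  have on: "on_line ?p (H m)" if m: "m \<in> {fst q, snd q, t}" for m
  proof -
    have "bdot (rep (H m)) (meet (\<lambda>t. rep (H t)) q) = 0"
      using m meet_on_line[OF h t q] bdot_meet[of "\<lambda>t. rep (H t)" q] bdot_commute by auto
    moreover have "m \<in> {1..n}" using m r t by auto
    ultimately show ?thesis using on_line_H by blast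
  qed
  have "{fst q, snd q, t} \<subseteq> {i \<in> {1..t}. on_line ?p (H i)}" using on r t by auto
  moreover have "card {fst q, snd q, t} = 3" using r by auto
  moreover have "finite {i \<in> {1..t}. on_line ?p (H i)}" by simp
  ultimately have "card {i \<in> {1..t}. on_line ?p (H i)} \<ge> 3" using card_mono by metis
  then show ?thesis using \<open>?p \<in> P2\<close> on t unfolding line_points_def mult_pts_def by auto
qed

(* If line t contains at most two multiple points of the first t lines, a good choice exists:
   the earlier pairs concurrent with line t meet in at most two points. *)
lemma good_choice_exists:
  assumes t: "t \<in> {1..n}"
    and few: "finite (line_points (H t) \<inter> mult_pts t H)" "card (line_points (H t) \<inter> mult_pts t H) \<le> 2"
  shows "\<exists>k a b. good_choice (incidence n H) t k a b"
proof -
  define I where "I = incidence n H"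
  define pt where "pt q = pclass (meet (\<lambda>t. rep (H t)) q)" for q
  note h = arrangement_represents[folded I_def]
  define Ms where "Ms = pt ` earlier_pairs I t"
  have "Ms \<subseteq> line_points (H t) \<inter> mult_pts t H"
    using meet_mult_point[OF t] unfolding Ms_def pt_def I_def by blast
  then have "finite Ms" "card Ms \<le> 2"
    using few card_mono[OF few(1)] finite_subset[OF _ few(1)] le_trans by blast+
  have same_iff: "pt q = pt r \<longleftrightarrow> \<not> separated I q r"
    if q: "q \<in> earlier_pairs I t" and r: "r \<in> earlier_pairs I t" for q r
  proof -
    have "pt q = pt r \<longleftrightarrow> cross (meet (\<lambda>t. rep (H t)) q) (meet (\<lambda>t. rep (H t)) r) = 0"
      unfolding pt_def using pclass_eq_iff meet_nonzero[OF h t q] meet_nonzero[OF h t r] by blast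
    then show ?thesis using separated_iff[OF h t q r] by simp
  qed
  have through_same: "through I r (fst q) \<and> through I r (snd q)"
    if "q \<in> earlier_pairs I t" "r \<in> earlier_pairs I t" "pt q = pt r" for q r
    using same_iff[of r q] that unfolding separated_def by auto
  have "card Ms = 0 \<or> card Ms = 1 \<or> card Ms = 2" using \<open>card Ms \<le> 2\<close> by linarith
  then consider "Ms = {}" | m where "Ms = {m}" | m1 m2 where "Ms = {m1, m2}" "m1 \<noteq> m2"
  proof (elim disjE)
    assume "card Ms = 0"
    then show thesis using that(1) \<open>finite Ms\<close> by simp
  next
    assume "card Ms = 1"
    then show thesis using that(2) by (elim card_1_singletonE)
  next
    assume "card Ms = 2"
    then show thesis using that(3) unfolding card_2_iff by blast
  qed
  then have "\<exists>k a b. good_choice I t k a b"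
  proof cases
    case 1
    then have "earlier_pairs I t = {}" unfolding Ms_def by simp
    then show ?thesis by (intro exI[of _ 0]) (simp add: good_choice_def)
  next
    case (2 m)
    then have "m \<in> pt ` earlier_pairs I t" unfolding Ms_def by simp
    then obtain q where q: "pt q = m" "q \<in> earlier_pairs I t" by (rule imageE) simp
    have "through I q (fst r) \<and> through I q (snd r)" if r: "r \<in> earlier_pairs I t" for r
    proof -
      have "pt r = pt q" using r q 2 unfolding Ms_def by blast
      then show ?thesis using through_same[OF r q(2)] by blast
    qed
    then have "good_choice I t 1 q q" using q(2) unfolding good_choice_def by simp
    then show ?thesis by blast
  next
    case (3 m1 m2)
    then have "m1 \<in> pt ` earlier_pairs I t" "m2 \<in> pt ` earlier_pairs I t" unfolding Ms_def by simp_all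
    then obtain q1 q2 where q: "pt q1 = m1" "q1 \<in> earlier_pairs I t" "pt q2 = m2" "q2 \<in> earlier_pairs I t"
      by (elim imageE) simp
    have "(through I q1 (fst r) \<and> through I q1 (snd r)) \<or> (through I q2 (fst r) \<and> through I q2 (snd r))"
      if r: "r \<in> earlier_pairs I t" for r
    proof -
      have "pt r = pt q1 \<or> pt r = pt q2" using r q 3 unfolding Ms_def by blast
      then show ?thesis using through_same[OF r q(2)] through_same[OF r q(4)] by blast
    qed
    moreover have "separated I q1 q2" using same_iff[OF q(2) q(4)] q 3 by simp
    ultimately have "good_choice I t 2 q1 q2" using q unfolding good_choice_def by simp
    then show ?thesis by blast
  qed
  then show ?thesis unfolding I_def .
qed

end

theorem mainTheorem2:
  fixes n :: nat and H :: "nat \<Rightarrow> (complex^3) set"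
  assumes lines: "\<forall>i\<in>{1..n}. H i \<in> P2"
    and distinct_lines: "inj_on H {1..n}"
    and hyp: "\<forall>t\<in>{1..n}. finite (line_points (H t) \<inter> mult_pts t H)
                            \<and> card (line_points (H t) \<inter> mult_pts t H) \<le> 2"
  shows "zariski_irreducible n (realization_space n (incidence n H))"
proof -
  define I where "I = incidence n H"
  have "\<forall>t\<in>{1..n}. \<exists>k a b. good_choice I t k a b"
    using good_choice_exists[OF lines distinct_lines] hyp unfolding I_def by blast
  then obtain K A B where "\<And>t. t \<in> {1..n} \<Longrightarrow> good_choice I t (K t) (A t) (B t)" by metis
  then interpret parametrization n I K A B by unfold_locales
  have "proj_tuple n (\<lambda>t. rep (H t)) \<in> realization_space n I"
    using represents_in_realization_space arrangement_represents[OF lines distinct_lines]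
    unfolding I_def by blast
  then have "U \<noteq> {}" using realization_space_eq_image by auto
  have "zariski_irreducible n ((\<lambda>y. proj_tuple n (ph y)) ` U)"
    using param_polyvec U_poly_open \<open>U \<noteq> {}\<close>
    by (rule zariski_irreducible_polynomial_image) (auto simp: U_def represents_def)
  then show ?thesis unfolding I_def[symmetric] realization_space_eq_image .
qed

end
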